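(* Let $(M,d)$ be a pointed metric space, let $\mu\in ba(\widetilde M)$ be optimal with $\|\mu\|=1$, let $\alpha>0$, and let $f\in B_{\mathrm{Lip}_0(M)}$ satisfy $(\Phi^*\mu)(f)>1-\alpha^2$. Let $A=\{(x,y)\in\widetilde M: f(m_{x,y})\ge1-\alpha\}$. Then $\mu(A)\ge1-\alpha$.
   Context: $M$ has base point $0$; $\mathrm{Lip}_0(M)$ is the real Banach space of Lipschitz $f\colon M\to\mathbb R$ with $f(0)=0$, normed by the best Lipschitz constant, with unit ball $B_{\mathrm{Lip}_0(M)}$. $\widetilde M=\{(x,y)\in M\times M:x\ne y\}$ and $f(m_{x,y})=(f(x)-f(y))/d(x,y)$. $ba(\widetilde M)$ is the Banach space of bounded finitely additive signed measures on the power set of $\widetilde M$ with norm $|\mu|(\widetilde M)$. $\Phi f(x,y)=(f(x)-f(y))/d(x,y)$ and $(\Phi^*\mu)(f)=\int_{\widetilde M}\Phi f\,d\mu$. A measure $\mu\in ba(\widetilde M)$ is called optimal if it is positive and $\|\Phi^*\mu\|=\|\mu\|$. *)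

theory Defs
  imports "HOL-Analysis.Analysis"
begin

definition Mt :: "('a \<times> 'a) set" where
  "Mt = {(x, y). x \<noteq> y}"

definition lip0_ball :: "'a::metric_space \<Rightarrow> ('a \<Rightarrow> real) set" where
  "lip0_ball z = {f. f z = 0 \<and> 1-lipschitz_on UNIV f}"

text \<open>Phi f (x,y) = (f x - f y) / d(x,y), i.e. f(m_{x,y}).\<close>
definition Phi :: "('a::metric_space \<Rightarrow> real) \<Rightarrow> 'a \<times> 'a \<Rightarrow> real" where
  "Phi f p = (f (fst p) - f (snd p)) / dist (fst p) (snd p)"

definition fin_partition :: "'b set \<Rightarrow> 'b set set \<Rightarrow> bool" where
  "fin_partition S P \<longleftrightarrow> finite P \<and> \<Union>P = S \<and> {} \<notin> P \<and>
     (\<forall>A\<in>P. \<forall>B\<in>P. A \<noteq> B \<longrightarrow> A \<inter> B = {})"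

definition fin_additive_on :: "'b set \<Rightarrow> ('b set \<Rightarrow> real) \<Rightarrow> bool" where
  "fin_additive_on S \<mu> \<longleftrightarrow>
     (\<forall>A B. A \<subseteq> S \<longrightarrow> B \<subseteq> S \<longrightarrow> A \<inter> B = {} \<longrightarrow> \<mu> (A \<union> B) = \<mu> A + \<mu> B)"

definition total_var :: "'b set \<Rightarrow> ('b set \<Rightarrow> real) \<Rightarrow> real" where
  "total_var S \<mu> = (SUP P\<in>{P. fin_partition S P}. \<Sum>A\<in>P. \<bar>\<mu> A\<bar>)"

definition is_ba :: "'b set \<Rightarrow> ('b set \<Rightarrow> real) \<Rightarrow> bool" where
  "is_ba S \<mu> \<longleftrightarrow> fin_additive_on S \<mu> \<and>
     bdd_above ((\<lambda>P. \<Sum>A\<in>P. \<bar>\<mu> A\<bar>) ` {P. fin_partition S P})"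

text \<open>Integral of a bounded function g over S with respect to a bounded finitely additive
  measure: limit of Riemann-type sums over finite partitions on whose pieces the
  oscillation of g tends to 0 (the standard integral of bounded functions w.r.t. ba measures).\<close>
definition ba_integral_is :: "'b set \<Rightarrow> ('b set \<Rightarrow> real) \<Rightarrow> ('b \<Rightarrow> real) \<Rightarrow> real \<Rightarrow> bool" where
  "ba_integral_is S \<mu> g I \<longleftrightarrow>
     (\<forall>\<epsilon>>0. \<exists>\<delta>>0. \<forall>P t. fin_partition S P \<longrightarrow>
        (\<forall>A\<in>P. \<forall>u\<in>A. \<forall>v\<in>A. \<bar>g u - g v\<bar> \<le> \<delta>) \<longrightarrow> (\<forall>A\<in>P. t A \<in> A) \<longrightarrow>
        \<bar>(\<Sum>A\<in>P. \<mu> A * g (t A)) - I\<bar> \<le> \<epsilon>)"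

definition ba_integral :: "'b set \<Rightarrow> ('b set \<Rightarrow> real) \<Rightarrow> ('b \<Rightarrow> real) \<Rightarrow> real" where
  "ba_integral S \<mu> g = (THE I. ba_integral_is S \<mu> g I)"

definition Phi_star :: "(('a::metric_space \<times> 'a) set \<Rightarrow> real) \<Rightarrow> ('a \<Rightarrow> real) \<Rightarrow> real" where
  "Phi_star \<mu> f = ba_integral Mt \<mu> (Phi f)"

definition Phi_star_norm :: "'a::metric_space \<Rightarrow> (('a \<times> 'a) set \<Rightarrow> real) \<Rightarrow> real" where
  "Phi_star_norm z \<mu> = (SUP f\<in>lip0_ball z. \<bar>Phi_star \<mu> f\<bar>)"

definition ba_norm :: "(('a \<times> 'a) set \<Rightarrow> real) \<Rightarrow> real" where
  "ba_norm \<mu> = total_var Mt \<mu>"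

definition optimal :: "'a::metric_space \<Rightarrow> (('a \<times> 'a) set \<Rightarrow> real) \<Rightarrow> bool" where
  "optimal z \<mu> \<longleftrightarrow> is_ba Mt \<mu> \<and> (\<forall>A\<subseteq>Mt. 0 \<le> \<mu> A) \<and>
     Phi_star_norm z \<mu> = ba_norm \<mu>"

end

theory Submission
  imports Defs
begin

text \<open>Since \<open>\<mu>\<close> is positive and \<open>\<bar>\<Phi> f\<bar> \<le> 1\<close> on \<open>M\<^sup>~\<close>, bounding \<open>\<Phi> f\<close> by \<open>1\<close> on
  \<open>A = {\<Phi> f \<ge> 1 - \<alpha>}\<close> and by \<open>1 - \<alpha>\<close> off \<open>A\<close> gives
  \<open>1 - \<alpha>\<^sup>2 < (\<Phi>\<^sup>* \<mu>) f \<le> \<mu> A + (1 - \<alpha>) (1 - \<mu> A) = 1 - \<alpha> + \<alpha> \<mu> A\<close>, i.e. \<open>\<mu> A > 1 - \<alpha>\<close>.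
  The integral is a limit of Riemann sums over partitions of small oscillation, so the
  bound is proved for such sums (the tag of a piece meeting the complement of \<open>A\<close> has
  value at most \<open>1 - \<alpha> + \<delta>\<close>) and passes to the limit.\<close>

lemma fin_additive_onD:
  "fin_additive_on S \<mu> \<Longrightarrow> A \<subseteq> S \<Longrightarrow> B \<subseteq> S \<Longrightarrow> A \<inter> B = {} \<Longrightarrow> \<mu> (A \<union> B) = \<mu> A + \<mu> B"
  unfolding fin_additive_on_def by blast

lemma fin_additive_on_empty: "fin_additive_on S \<mu> \<Longrightarrow> \<mu> {} = 0"
  using fin_additive_onD[of S \<mu> "{}" "{}"] by simp

lemma fin_additive_on_Diff:
  assumes "fin_additive_on S \<mu>" and "B \<subseteq> S"
  shows "\<mu> (S - B) = \<mu> S - \<mu> B"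
proof -
  have "\<mu> (B \<union> (S - B)) = \<mu> B + \<mu> (S - B)"
    using assms by (intro fin_additive_onD) auto
  moreover have "B \<union> (S - B) = S" using assms(2) by blast
  ultimately show ?thesis by simp
qed

lemma fin_additive_on_UN:
  assumes fa: "fin_additive_on S \<mu>" and "finite I"
    and "\<And>i. i \<in> I \<Longrightarrow> F i \<subseteq> S"
    and "disjoint_family_on F I"
  shows "\<mu> (\<Union>i\<in>I. F i) = (\<Sum>i\<in>I. \<mu> (F i))"
  using assms(2-)
proof (induction I rule: finite_induct)
  case empty
  then show ?case using fin_additive_on_empty[OF fa] by simp
next
  case (insert i I)
  have sub: "\<And>j. j \<in> I \<Longrightarrow> F j \<subseteq> S" using insert.prems(1) by simp
  have "F i \<inter> (\<Union>j\<in>I. F j) = {}" and disj: "disjoint_family_on F I"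
    using insert.prems(2) unfolding disjoint_family_on_insert[OF insert.hyps(2)] by simp_all
  moreover have "F i \<subseteq> S" "(\<Union>j\<in>I. F j) \<subseteq> S" using insert.prems(1) by auto
  ultimately have "\<mu> (F i \<union> (\<Union>j\<in>I. F j)) = \<mu> (F i) + \<mu> (\<Union>j\<in>I. F j)"
    by (intro fin_additive_onD[OF fa])
  then show ?case using insert.IH[OF sub disj] insert.hyps by simp
qed

lemma fin_partition_subset: "fin_partition S P \<Longrightarrow> A \<in> P \<Longrightarrow> A \<subseteq> S"
  unfolding fin_partition_def by blast

lemma fin_partition_some_in: "fin_partition S P \<Longrightarrow> A \<in> P \<Longrightarrow> (SOME u. u \<in> A) \<in> A"
  unfolding fin_partition_def by (metis ex_in_conv someI_ex)

lemma fin_additive_on_partition_Int: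
  assumes fa: "fin_additive_on S \<mu>" and P: "fin_partition S P" and "B \<subseteq> S"
  shows "\<mu> B = (\<Sum>A\<in>P. \<mu> (A \<inter> B))"
proof -
  have "(\<Union>A\<in>P. A \<inter> B) = B" using P \<open>B \<subseteq> S\<close> unfolding fin_partition_def by blast
  moreover have "disjoint_family_on (\<lambda>A. A \<inter> B) P"
    using P unfolding fin_partition_def disjoint_family_on_def by blast
  then have "\<mu> (\<Union>A\<in>P. A \<inter> B) = (\<Sum>A\<in>P. \<mu> (A \<inter> B))"
    using P \<open>B \<subseteq> S\<close> unfolding fin_partition_def
    by (intro fin_additive_on_UN[OF fa]) auto
  ultimately show ?thesis by simp
qed

lemma fin_additive_on_partition:
  assumes "fin_additive_on S \<mu>" and P: "fin_partition S P"
  shows "\<mu> S = (\<Sum>A\<in>P. \<mu> A)"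
proof -
  have "\<mu> S = (\<Sum>A\<in>P. \<mu> (A \<inter> S))"
    by (rule fin_additive_on_partition_Int[OF assms order_refl])
  also have "\<dots> = (\<Sum>A\<in>P. \<mu> A)"
    using fin_partition_subset[OF P] by (intro sum.cong refl) (simp add: Int_absorb2)
  finally show ?thesis .
qed

lemma total_var_nonneg:
  assumes fa: "fin_additive_on S \<mu>" and pos: "\<And>A. A \<subseteq> S \<Longrightarrow> 0 \<le> \<mu> A"
  shows "total_var S \<mu> = \<mu> S"
proof -
  have "fin_partition S (if S = {} then {} else {S})"
    unfolding fin_partition_def by simp
  then have ne: "{P. fin_partition S P} \<noteq> {}" by blast
  have "(\<Sum>A\<in>P. \<bar>\<mu> A\<bar>) = \<mu> S" if P: "fin_partition S P" for P
    using fin_additive_on_partition[OF fa P] pos fin_partition_subset[OF P] by simp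
  then have "total_var S \<mu> = (SUP P\<in>{P. fin_partition S P}. \<mu> S)"
    unfolding total_var_def by (intro SUP_cong) auto
  also have "\<dots> = \<mu> S" using ne by simp
  finally show ?thesis .
qed

definition oscillation_le :: "('b \<Rightarrow> real) \<Rightarrow> 'b set set \<Rightarrow> real \<Rightarrow> bool"
  where "oscillation_le g P \<delta> \<longleftrightarrow> (\<forall>A\<in>P. \<forall>u\<in>A. \<forall>v\<in>A. \<bar>g u - g v\<bar> \<le> \<delta>)"

lemma oscillation_leD: "oscillation_le g P \<delta> \<Longrightarrow> A \<in> P \<Longrightarrow> u \<in> A \<Longrightarrow> v \<in> A \<Longrightarrow> \<bar>g u - g v\<bar> \<le> \<delta>"
  unfolding oscillation_le_def by blast

lemma oscillation_le_mono: "oscillation_le g P \<delta> \<Longrightarrow> \<delta> \<le> \<delta>' \<Longrightarrow> oscillation_le g P \<delta>'"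
  unfolding oscillation_le_def by force

lemma exists_fine_partition:
  fixes g :: "'b \<Rightarrow> real"
  assumes "\<delta> > 0" and bnd: "\<And>u. u \<in> S \<Longrightarrow> \<bar>g u\<bar> \<le> B"
  obtains P where "fin_partition S P" and "oscillation_le g P \<delta>"
proof
  define k where "k u = \<lfloor>g u / \<delta>\<rfloor>" for u
  define P where "P = (\<lambda>n. {u\<in>S. k u = n}) ` k ` S"
  have "k ` S \<subseteq> {\<lfloor>- B / \<delta>\<rfloor>..\<lfloor>B / \<delta>\<rfloor>}"
  proof
    fix n assume "n \<in> k ` S"
    then obtain u where "u \<in> S" "n = k u" by blast
    with bnd have "- B \<le> g u" "g u \<le> B" by (force simp: abs_le_iff)+
    then have "- B / \<delta> \<le> g u / \<delta>" "g u / \<delta> \<le> B / \<delta>"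
      using \<open>\<delta> > 0\<close> divide_right_mono[of "- B" "g u" \<delta>] by (simp_all add: divide_right_mono)
    then show "n \<in> {\<lfloor>- B / \<delta>\<rfloor>..\<lfloor>B / \<delta>\<rfloor>}"
      unfolding \<open>n = k u\<close> k_def by (auto intro: floor_mono)
  qed
  then have "finite P" unfolding P_def by (meson finite_atLeastAtMost_int finite_imageI finite_subset)
  then show "fin_partition S P" unfolding fin_partition_def P_def by auto
  show "oscillation_le g P \<delta>"
    unfolding oscillation_le_def
  proof (intro ballI)
    fix A u v assume "A \<in> P" "u \<in> A" "v \<in> A"
    then have "\<lfloor>g u / \<delta>\<rfloor> = \<lfloor>g v / \<delta>\<rfloor>" unfolding P_def k_def by auto
    then have "\<bar>g u / \<delta> - g v / \<delta>\<bar> \<le> 1"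
      by (smt (verit) floor_eq_iff)
    then show "\<bar>g u - g v\<bar> \<le> \<delta>"
      using \<open>\<delta> > 0\<close> by (simp add: diff_divide_distrib[symmetric] abs_divide divide_le_eq)
  qed
qed

definition riemann_sum :: "('b set \<Rightarrow> real) \<Rightarrow> ('b \<Rightarrow> real) \<Rightarrow> 'b set set \<Rightarrow> ('b set \<Rightarrow> 'b) \<Rightarrow> real"
  where "riemann_sum \<mu> g P t = (\<Sum>A\<in>P. \<mu> A * g (t A))"

lemma ba_integral_isD:
  assumes "ba_integral_is S \<mu> g I" and "\<epsilon> > 0"
  obtains \<delta> where "\<delta> > 0"
    and "\<And>P t. fin_partition S P \<Longrightarrow> oscillation_le g P \<delta> \<Longrightarrow> (\<forall>A\<in>P. t A \<in> A) \<Longrightarrow>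
           \<bar>riemann_sum \<mu> g P t - I\<bar> \<le> \<epsilon>"
proof -
  obtain \<delta> where "\<delta> > 0" and close: "\<forall>P t. fin_partition S P \<longrightarrow>
      (\<forall>A\<in>P. \<forall>u\<in>A. \<forall>v\<in>A. \<bar>g u - g v\<bar> \<le> \<delta>) \<longrightarrow> (\<forall>A\<in>P. t A \<in> A) \<longrightarrow>
      \<bar>(\<Sum>A\<in>P. \<mu> A * g (t A)) - I\<bar> \<le> \<epsilon>"
    using assms(1)[unfolded ba_integral_is_def, rule_format, OF assms(2)] by auto
  show thesis
    by (rule that[OF \<open>\<delta> > 0\<close>])
       (use close in \<open>auto simp: oscillation_le_def riemann_sum_def\<close>)
qed

lemma ba_integral_isI:
  assumes "\<And>\<epsilon>. \<epsilon> > 0 \<Longrightarrow> \<exists>\<delta>>0. \<forall>P t. fin_partition S P \<longrightarrow> oscillation_le g P \<delta> \<longrightarrow>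
             (\<forall>A\<in>P. t A \<in> A) \<longrightarrow> \<bar>riemann_sum \<mu> g P t - I\<bar> \<le> \<epsilon>"
  shows "ba_integral_is S \<mu> g I"
  using assms unfolding ba_integral_is_def oscillation_le_def riemann_sum_def by simp

lemma riemann_sum_refine:
  assumes fa: "fin_additive_on S \<mu>" and P: "fin_partition S P" and Q: "fin_partition S Q"
  shows "riemann_sum \<mu> g P t = (\<Sum>A\<in>P. \<Sum>B\<in>Q. \<mu> (A \<inter> B) * g (t A))"
  unfolding riemann_sum_def
proof (rule sum.cong[OF refl])
  fix A assume "A \<in> P"
  have "\<mu> A = (\<Sum>B\<in>Q. \<mu> (B \<inter> A))"
    using fin_additive_on_partition_Int[OF fa Q fin_partition_subset[OF P \<open>A \<in> P\<close>]] .
  then show "\<mu> A * g (t A) = (\<Sum>B\<in>Q. \<mu> (A \<inter> B) * g (t A))"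
    by (simp add: sum_distrib_right Int_commute)
qed

text \<open>Both sums are compared on the common refinement \<open>{A \<inter> B. A \<in> P, B \<in> Q}\<close>.\<close>
lemma riemann_sum_diff_le:
  assumes fa: "fin_additive_on S \<mu>" and pos: "\<And>A. A \<subseteq> S \<Longrightarrow> 0 \<le> \<mu> A"
    and P: "fin_partition S P" and Q: "fin_partition S Q"
    and oscP: "oscillation_le g P \<delta>\<^sub>1" and oscQ: "oscillation_le g Q \<delta>\<^sub>2"
    and t: "\<forall>A\<in>P. t A \<in> A" and s: "\<forall>B\<in>Q. s B \<in> B"
  shows "\<bar>riemann_sum \<mu> g P t - riemann_sum \<mu> g Q s\<bar> \<le> \<mu> S * (\<delta>\<^sub>1 + \<delta>\<^sub>2)"
proof -
  have "riemann_sum \<mu> g Q s = (\<Sum>B\<in>Q. \<Sum>A\<in>P. \<mu> (B \<inter> A) * g (s B))"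
    by (rule riemann_sum_refine[OF fa Q P])
  also have "\<dots> = (\<Sum>A\<in>P. \<Sum>B\<in>Q. \<mu> (A \<inter> B) * g (s B))"
    by (subst sum.swap) (simp add: Int_commute)
  finally have "riemann_sum \<mu> g P t - riemann_sum \<mu> g Q s
      = (\<Sum>A\<in>P. \<Sum>B\<in>Q. \<mu> (A \<inter> B) * (g (t A) - g (s B)))"
    by (simp add: riemann_sum_refine[OF fa P Q] sum_subtractf[symmetric] right_diff_distrib)
  also have "\<bar>\<dots>\<bar> \<le> (\<Sum>A\<in>P. \<Sum>B\<in>Q. \<mu> (A \<inter> B) * (\<delta>\<^sub>1 + \<delta>\<^sub>2))"
  proof (intro order_trans[OF sum_abs] sum_mono order_trans[OF sum_abs])
    fix A B assume "A \<in> P" "B \<in> Q"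
    have "0 \<le> \<mu> (A \<inter> B)" using pos fin_partition_subset[OF P \<open>A \<in> P\<close>] by blast
    moreover have "\<bar>g (t A) - g (s B)\<bar> \<le> \<delta>\<^sub>1 + \<delta>\<^sub>2" if "u \<in> A \<inter> B" for u
      using oscillation_leD[OF oscP \<open>A \<in> P\<close>, of "t A" u] oscillation_leD[OF oscQ \<open>B \<in> Q\<close>, of u "s B"]
        t s \<open>A \<in> P\<close> \<open>B \<in> Q\<close> that by auto
    ultimately show "\<bar>\<mu> (A \<inter> B) * (g (t A) - g (s B))\<bar> \<le> \<mu> (A \<inter> B) * (\<delta>\<^sub>1 + \<delta>\<^sub>2)"
      using fin_additive_on_empty[OF fa] by (cases "A \<inter> B = {}") (auto simp: abs_mult mult_left_mono)
  qed
  also have "\<dots> = \<mu> S * (\<delta>\<^sub>1 + \<delta>\<^sub>2)"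
    using riemann_sum_refine[OF fa P Q, of "\<lambda>_. \<delta>\<^sub>1 + \<delta>\<^sub>2" t]
    by (simp add: riemann_sum_def fin_additive_on_partition[OF fa P] sum_distrib_right)
  finally show ?thesis .
qed

lemma pairwise_meeting_intervals_common_point:
  fixes c r :: "nat \<Rightarrow> real"
  assumes meet: "\<And>n m. \<bar>c n - c m\<bar> \<le> r n + r m"
  obtains x where "\<And>n. \<bar>c n - x\<bar> \<le> r n"
proof
  fix n
  have bdd: "bdd_below (range (\<lambda>m. c m + r m))"
  proof (rule bdd_belowI2)
    fix m show "c 0 - r 0 \<le> c m + r m"
      using meet[of m 0] unfolding abs_le_iff by linarith
  qed
  have "(INF m. c m + r m) \<le> c n + r n"
    by (rule cINF_lower[OF bdd]) simp
  moreover have "c n - r n \<le> (INF m. c m + r m)"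
  proof (rule cINF_greatest)
    fix m show "c n - r n \<le> c m + r m"
      using meet[of m n] unfolding abs_le_iff by linarith
  qed simp
  ultimately show "\<bar>c n - (INF m. c m + r m)\<bar> \<le> r n" by linarith
qed

lemma ba_integral_is_unique:
  fixes g :: "'b \<Rightarrow> real"
  assumes bnd: "\<And>u. u \<in> S \<Longrightarrow> \<bar>g u\<bar> \<le> B"
    and I\<^sub>1: "ba_integral_is S \<mu> g I\<^sub>1" and I\<^sub>2: "ba_integral_is S \<mu> g I\<^sub>2"
  shows "I\<^sub>1 = I\<^sub>2"
proof -
  have "\<bar>I\<^sub>1 - I\<^sub>2\<bar> \<le> 0 + \<epsilon>" if "\<epsilon> > 0" for \<epsilon>
  proof -
    obtain \<delta>\<^sub>1 where "\<delta>\<^sub>1 > 0" and close\<^sub>1: "\<And>P t. fin_partition S P \<Longrightarrow> oscillation_le g P \<delta>\<^sub>1 \<Longrightarrow>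
        (\<forall>A\<in>P. t A \<in> A) \<Longrightarrow> \<bar>riemann_sum \<mu> g P t - I\<^sub>1\<bar> \<le> \<epsilon> / 2"
      using ba_integral_isD[OF I\<^sub>1, of "\<epsilon> / 2"] \<open>\<epsilon> > 0\<close> by auto
    obtain \<delta>\<^sub>2 where "\<delta>\<^sub>2 > 0" and close\<^sub>2: "\<And>P t. fin_partition S P \<Longrightarrow> oscillation_le g P \<delta>\<^sub>2 \<Longrightarrow>
        (\<forall>A\<in>P. t A \<in> A) \<Longrightarrow> \<bar>riemann_sum \<mu> g P t - I\<^sub>2\<bar> \<le> \<epsilon> / 2"
      using ba_integral_isD[OF I\<^sub>2, of "\<epsilon> / 2"] \<open>\<epsilon> > 0\<close> by auto
    obtain P where P: "fin_partition S P" and osc: "oscillation_le g P (min \<delta>\<^sub>1 \<delta>\<^sub>2)"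
      using exists_fine_partition[where \<delta> = "min \<delta>\<^sub>1 \<delta>\<^sub>2" and g = g, OF _ bnd] \<open>\<delta>\<^sub>1 > 0\<close> \<open>\<delta>\<^sub>2 > 0\<close>
      by auto
    define t where "t A = (SOME u. u \<in> A)" for A :: "'b set"
    have t: "\<forall>A\<in>P. t A \<in> A" using fin_partition_some_in[OF P] unfolding t_def by blast
    have "\<bar>riemann_sum \<mu> g P t - I\<^sub>1\<bar> \<le> \<epsilon> / 2"
      using close\<^sub>1[OF P oscillation_le_mono[OF osc] t] by simp
    moreover have "\<bar>riemann_sum \<mu> g P t - I\<^sub>2\<bar> \<le> \<epsilon> / 2"
      using close\<^sub>2[OF P oscillation_le_mono[OF osc] t] by simp
    ultimately show ?thesis by linarith
  qed
  then have "\<bar>I\<^sub>1 - I\<^sub>2\<bar> \<le> 0" by (rule field_le_epsilon)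
  then show ?thesis by simp
qed

text \<open>The integral is found as a common point of the intervals of radius \<open>\<mu> S / (n + 1)\<close>
  around the Riemann sums over partitions of oscillation \<open>1 / (n + 1)\<close>.\<close>
lemma ba_integral_is_exists:
  fixes g :: "'b \<Rightarrow> real"
  assumes fa: "fin_additive_on S \<mu>" and pos: "\<And>A. A \<subseteq> S \<Longrightarrow> 0 \<le> \<mu> A"
    and bnd: "\<And>u. u \<in> S \<Longrightarrow> \<bar>g u\<bar> \<le> B"
  obtains I where "ba_integral_is S \<mu> g I"
proof -
  have "\<forall>n. \<exists>P. fin_partition S P \<and> oscillation_le g P (1 / (real n + 1))"
  proof
    fix n :: nat
    obtain P where "fin_partition S P" "oscillation_le g P (1 / (real n + 1))"
      using exists_fine_partition[where \<delta> = "1 / (real n + 1)" and g = g, OF _ bnd] by auto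
    then show "\<exists>P. fin_partition S P \<and> oscillation_le g P (1 / (real n + 1))" by blast
  qed
  then obtain P where P: "\<And>n. fin_partition S (P n)"
    and oscP: "\<And>n. oscillation_le g (P n) (1 / (real n + 1))"
    using choice[of "\<lambda>n P. fin_partition S P \<and> oscillation_le g P (1 / (real n + 1))"] by blast
  define t where "t A = (SOME u. u \<in> A)" for A :: "'b set"
  have t: "\<forall>A\<in>P n. t A \<in> A" for n using fin_partition_some_in[OF P] unfolding t_def by blast
  define J where "J n = riemann_sum \<mu> g (P n) t" for n
  have meet: "\<bar>J n - J m\<bar> \<le> \<mu> S / (real n + 1) + \<mu> S / (real m + 1)" for n m
    using riemann_sum_diff_le[OF fa pos P P oscP oscP t t] unfolding J_def
    by (simp add: distrib_left)
  obtain I where J: "\<And>m. \<bar>J m - I\<bar> \<le> \<mu> S / (real m + 1)"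
    using pairwise_meeting_intervals_common_point[of J "\<lambda>m. \<mu> S / (real m + 1)", OF meet] by blast
  have "ba_integral_is S \<mu> g I"
  proof (rule ba_integral_isI)
    fix \<epsilon> :: real assume "\<epsilon> > 0"
    have "0 \<le> \<mu> S" using pos by simp
    obtain m :: nat where "4 * \<mu> S / \<epsilon> < real m"
      using reals_Archimedean2 by blast
    then have "4 * \<mu> S / \<epsilon> < real m + 1" by linarith
    then have m: "\<mu> S / (real m + 1) \<le> \<epsilon> / 4"
      using \<open>\<epsilon> > 0\<close> by (simp add: field_simps)
    define \<delta> where "\<delta> = \<epsilon> / (2 * (\<mu> S + 1))"
    have "\<delta> > 0" using \<open>\<epsilon> > 0\<close> \<open>0 \<le> \<mu> S\<close> by (simp add: \<delta>_def)
    have \<delta>: "\<mu> S * \<delta> \<le> \<epsilon> / 2"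
      using \<open>\<epsilon> > 0\<close> \<open>0 \<le> \<mu> S\<close> by (simp add: \<delta>_def field_simps)
    show "\<exists>\<delta>>0. \<forall>Q s. fin_partition S Q \<longrightarrow> oscillation_le g Q \<delta> \<longrightarrow>
        (\<forall>A\<in>Q. s A \<in> A) \<longrightarrow> \<bar>riemann_sum \<mu> g Q s - I\<bar> \<le> \<epsilon>"
    proof (intro exI[of _ \<delta>] conjI allI impI)
      fix Q s assume Q: "fin_partition S Q" and "oscillation_le g Q \<delta>" and "\<forall>A\<in>Q. s A \<in> A"
      then have "\<bar>riemann_sum \<mu> g Q s - J m\<bar> \<le> \<mu> S * \<delta> + \<mu> S / (real m + 1)"
        using riemann_sum_diff_le[OF fa pos Q P _ oscP _ t] unfolding J_def
        by (simp add: distrib_left)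
      then show "\<bar>riemann_sum \<mu> g Q s - I\<bar> \<le> \<epsilon>"
        using J[of m] m \<delta> by linarith
    qed (fact \<open>\<delta> > 0\<close>)
  qed
  then show thesis by (rule that)
qed

lemma ba_integral_is_ba_integral:
  fixes g :: "'b \<Rightarrow> real"
  assumes "fin_additive_on S \<mu>" and "\<And>A. A \<subseteq> S \<Longrightarrow> 0 \<le> \<mu> A"
    and bnd: "\<And>u. u \<in> S \<Longrightarrow> \<bar>g u\<bar> \<le> B"
  shows "ba_integral_is S \<mu> g (ba_integral S \<mu> g)"
proof -
  obtain I where I: "ba_integral_is S \<mu> g I" using ba_integral_is_exists[OF assms] .
  have "J = I" if "ba_integral_is S \<mu> g J" for J
    using ba_integral_is_unique[OF bnd that I] .
  with I show ?thesis
    unfolding ba_integral_def by (rule theI)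
qed

lemma riemann_sum_le_level:
  assumes fa: "fin_additive_on S \<mu>" and pos: "\<And>A. A \<subseteq> S \<Longrightarrow> 0 \<le> \<mu> A"
    and P: "fin_partition S P" and osc: "oscillation_le g P \<delta>" and t: "\<forall>A\<in>P. t A \<in> A"
    and le_b: "\<And>u. u \<in> S \<Longrightarrow> g u \<le> b"
  shows "riemann_sum \<mu> g P t \<le> b * \<mu> {u\<in>S. c \<le> g u} + (c + \<delta>) * \<mu> (S - {u\<in>S. c \<le> g u})"
proof -
  define L where "L = {u\<in>S. c \<le> g u}"
  have "\<mu> A * g (t A) \<le> b * \<mu> (A \<inter> L) + (c + \<delta>) * \<mu> (A \<inter> (S - L))" if "A \<in> P" for A
  proof -
    have "A \<subseteq> S" using fin_partition_subset[OF P that] .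
    have "\<mu> (A \<inter> L \<union> A \<inter> (S - L)) = \<mu> (A \<inter> L) + \<mu> (A \<inter> (S - L))"
      by (rule fin_additive_onD[OF fa]) (use \<open>A \<subseteq> S\<close> in auto)
    moreover have "A \<inter> L \<union> A \<inter> (S - L) = A" using \<open>A \<subseteq> S\<close> by blast
    ultimately have split: "\<mu> A = \<mu> (A \<inter> L) + \<mu> (A \<inter> (S - L))" by simp
    have "g (t A) \<le> b" using le_b t that \<open>A \<subseteq> S\<close> by blast
    moreover have "0 \<le> \<mu> (A \<inter> L)" using \<open>A \<subseteq> S\<close> by (intro pos) blast
    ultimately have low: "\<mu> (A \<inter> L) * g (t A) \<le> \<mu> (A \<inter> L) * b" by (rule mult_left_mono)
    have high: "\<mu> (A \<inter> (S - L)) * g (t A) \<le> \<mu> (A \<inter> (S - L)) * (c + \<delta>)"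
    proof (cases "A \<inter> (S - L) = {}")
      case True
      then show ?thesis using fin_additive_on_empty[OF fa] by simp
    next
      case False
      then obtain u where "u \<in> A" "u \<in> S" "\<not> c \<le> g u" unfolding L_def by blast
      then have "g (t A) \<le> c + \<delta>"
        using oscillation_leD[OF osc that, of "t A" u] t that by auto
      moreover have "0 \<le> \<mu> (A \<inter> (S - L))" by (intro pos) blast
      ultimately show ?thesis by (rule mult_left_mono)
    qed
    have "\<mu> A * g (t A) = \<mu> (A \<inter> L) * g (t A) + \<mu> (A \<inter> (S - L)) * g (t A)"
      unfolding split by (rule distrib_right)
    with low high show ?thesis by (simp only: mult.commute)
  qed
  then have "riemann_sum \<mu> g P t \<le> (\<Sum>A\<in>P. b * \<mu> (A \<inter> L) + (c + \<delta>) * \<mu> (A \<inter> (S - L)))"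
    unfolding riemann_sum_def by (rule sum_mono)
  also have "\<dots> = b * (\<Sum>A\<in>P. \<mu> (A \<inter> L)) + (c + \<delta>) * (\<Sum>A\<in>P. \<mu> (A \<inter> (S - L)))"
    by (simp only: sum.distrib sum_distrib_left)
  also have "\<dots> = b * \<mu> L + (c + \<delta>) * \<mu> (S - L)"
    using fin_additive_on_partition_Int[OF fa P, of L] fin_additive_on_partition_Int[OF fa P, of "S - L"]
    unfolding L_def by auto
  finally show ?thesis unfolding L_def .
qed

lemma ba_integral_is_le_level:
  fixes g :: "'b \<Rightarrow> real"
  assumes fa: "fin_additive_on S \<mu>" and pos: "\<And>A. A \<subseteq> S \<Longrightarrow> 0 \<le> \<mu> A"
    and bnd: "\<And>u. u \<in> S \<Longrightarrow> \<bar>g u\<bar> \<le> b" and I: "ba_integral_is S \<mu> g I"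
  shows "I \<le> b * \<mu> {u\<in>S. c \<le> g u} + c * \<mu> (S - {u\<in>S. c \<le> g u})"
proof -
  define L where "L = {u\<in>S. c \<le> g u}"
  have le_b: "g u \<le> b" if "u \<in> S" for u using bnd[OF that] by linarith
  have "0 \<le> \<mu> (S - L)" using pos by simp
  have "I \<le> b * \<mu> L + c * \<mu> (S - L) + \<epsilon>" if "\<epsilon> > 0" for \<epsilon>
  proof -
    obtain \<delta>\<^sub>0 where "\<delta>\<^sub>0 > 0" and close: "\<And>P t. fin_partition S P \<Longrightarrow> oscillation_le g P \<delta>\<^sub>0 \<Longrightarrow>
        (\<forall>A\<in>P. t A \<in> A) \<Longrightarrow> \<bar>riemann_sum \<mu> g P t - I\<bar> \<le> \<epsilon> / 2"
      using ba_integral_isD[OF I, of "\<epsilon> / 2"] \<open>\<epsilon> > 0\<close> by auto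
    define \<delta> where "\<delta> = min \<delta>\<^sub>0 (\<epsilon> / (2 * (\<mu> (S - L) + 1)))"
    have "\<delta> > 0" using \<open>\<delta>\<^sub>0 > 0\<close> \<open>\<epsilon> > 0\<close> \<open>0 \<le> \<mu> (S - L)\<close> by (simp add: \<delta>_def)
    have "\<delta> * \<mu> (S - L) \<le> \<epsilon> / (2 * (\<mu> (S - L) + 1)) * \<mu> (S - L)"
      using \<open>0 \<le> \<mu> (S - L)\<close> by (intro mult_right_mono) (simp_all add: \<delta>_def)
    also have "\<dots> \<le> \<epsilon> / 2"
      using \<open>\<epsilon> > 0\<close> \<open>0 \<le> \<mu> (S - L)\<close> by (simp add: field_simps)
    finally have small: "\<delta> * \<mu> (S - L) \<le> \<epsilon> / 2" .
    obtain P where P: "fin_partition S P" and osc: "oscillation_le g P \<delta>"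
      using exists_fine_partition[where \<delta> = \<delta> and g = g, OF _ bnd] \<open>\<delta> > 0\<close> by auto
    define t where "t A = (SOME u. u \<in> A)" for A :: "'b set"
    have t: "\<forall>A\<in>P. t A \<in> A" using fin_partition_some_in[OF P] unfolding t_def by blast
    have "oscillation_le g P \<delta>\<^sub>0" using oscillation_le_mono[OF osc] by (simp add: \<delta>_def)
    then have "\<bar>riemann_sum \<mu> g P t - I\<bar> \<le> \<epsilon> / 2" by (rule close[OF P _ t])
    then have "I \<le> riemann_sum \<mu> g P t + \<epsilon> / 2" by linarith
    also have "riemann_sum \<mu> g P t \<le> b * \<mu> L + (c + \<delta>) * \<mu> (S - L)"
      unfolding L_def using riemann_sum_le_level[OF fa pos P osc t le_b] .
    finally show ?thesis using small by (simp add: algebra_simps)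
  qed
  then show ?thesis unfolding L_def by (rule field_le_epsilon)
qed

lemma abs_Phi_le_1:
  assumes "f \<in> lip0_ball z" and "p \<in> Mt"
  shows "\<bar>Phi f p\<bar> \<le> 1"
proof -
  obtain x y where p: "p = (x, y)" and "x \<noteq> y" using \<open>p \<in> Mt\<close> unfolding Mt_def by auto
  have "1-lipschitz_on UNIV f" using assms(1) unfolding lip0_ball_def by blast
  then have "\<bar>f x - f y\<bar> \<le> dist x y"
    using lipschitz_onD[of 1 UNIV f x y] by (simp add: dist_real_def)
  then show ?thesis using \<open>x \<noteq> y\<close> unfolding p Phi_def by (simp add: abs_divide)
qed

theorem lemma3p1:
  fixes z :: "'a::metric_space" and \<mu> :: "('a \<times> 'a) set \<Rightarrow> real"
    and \<alpha> :: real and f :: "'a \<Rightarrow> real"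
  assumes "optimal z \<mu>"
    and "ba_norm \<mu> = 1"
    and "\<alpha> > 0"
    and "f \<in> lip0_ball z"
    and "Phi_star \<mu> f > 1 - \<alpha>\<^sup>2"
  shows "\<mu> {p \<in> Mt. Phi f p \<ge> 1 - \<alpha>} \<ge> 1 - \<alpha>"
proof -
  let ?L = "{p \<in> Mt. Phi f p \<ge> 1 - \<alpha>}"
  have fa: "fin_additive_on Mt \<mu>" and pos: "\<And>A. A \<subseteq> Mt \<Longrightarrow> 0 \<le> \<mu> A"
    using assms(1) unfolding optimal_def is_ba_def by auto
  have "\<mu> Mt = 1" using assms(2) total_var_nonneg[OF fa pos] unfolding ba_norm_def by simp
  have bnd: "\<And>p. p \<in> Mt \<Longrightarrow> \<bar>Phi f p\<bar> \<le> 1" using abs_Phi_le_1[OF assms(4)] .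
  have "1 - \<alpha>\<^sup>2 < Phi_star \<mu> f" by (fact assms(5))
  also have "\<dots> \<le> 1 * \<mu> ?L + (1 - \<alpha>) * \<mu> (Mt - ?L)"
    unfolding Phi_star_def
    by (rule ba_integral_is_le_level[OF fa pos bnd ba_integral_is_ba_integral[OF fa pos bnd]])
  also have "\<mu> (Mt - ?L) = 1 - \<mu> ?L"
    using fin_additive_on_Diff[OF fa, of ?L] \<open>\<mu> Mt = 1\<close> by auto
  also have "1 * \<mu> ?L + (1 - \<alpha>) * (1 - \<mu> ?L) = 1 - \<alpha> + \<alpha> * \<mu> ?L"
    by (simp add: algebra_simps)
  finally have "\<alpha> * (1 - \<alpha>) < \<alpha> * \<mu> ?L" by (simp add: algebra_simps power2_eq_square)
  then show ?thesis using \<open>\<alpha> > 0\<close> by simp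
qed

end
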